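(* Let $h$ be a $k$-ary fixed function symbol of the term language, interpreted semantically as a differentiable function $h:\mathbb{R}^k\to\mathbb{R}$. Suppose that for each $i\in\{1,\dots,k\}$ there is a term $\partial_i h$ whose free variables are among $y_1,\dots,y_k$ such that for every state $\omega$, $$\omega[\![\partial_i h]\!] = \frac{\partial h}{\partial y_i}\big(\omega(y_1),\dots,\omega(y_k)\big).$$ Then for all differential-free terms $e_1,\dots,e_k$ the equation $$(h(e_1,\dots,e_k))' = \sum_{i=1}^k \partial_i h(e_1,\dots,e_k)\cdot (e_i)'$$ is valid (true in every state), where $\partial_i h(e_1,\dots,e_k)$ denotes the term obtained from $\partial_i h$ by substituting $e_j$ for $y_j$ ($j=1,\dots,k$).
   Context: Fix a set $V$ of real-valued variables such that each variable $x$ has an associated differential variable $x'\in V$. A state is a map $\omega:V\to\mathbb{R}$. Terms are generated by $e ::= x \mid c \mid e+e \mid e\cdot e \mid h(e_1,\dots,e_k)\mid (e)'$, where $x\in V$, $c$ is a rational constant, and $h$ ranges over finitely many fixed function symbols, each $k$-ary $h$ having a fixed interpretation as a $C^\infty$ function $\mathbb{R}^k\to\mathbb{R}$ (denoted by the same letter). A term is differential-free if it contains no subterm $(e)'$ and no differential variable. The value $\omega[\![e]\!]\in\mathbb{R}$ is defined as usual ($\omega[\![x]\!]=\omega(x)$, sums and products pointwise, $\omega[\![h(e_1,\dots,e_k)]\!]=h(\omega[\![e_1]\!],\dots,\omega[\![e_k]\!])$), and the differential has value $\omega[\![(e)']\!]=\sum_{x\in V}\omega(x')\,\frac{\partial \omega[\![e]\!]}{\partial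 x}$, where $\frac{\partial \omega[\![e]\!]}{\partial x}$ is the partial derivative of the value of $e$ with respect to the value of variable $x$, evaluated at $\omega$. An equation $e=\tilde e$ is valid if $\omega[\![e]\!]=\omega[\![\tilde e]\!]$ for all states $\omega$. *)

theory Defs
  imports "HOL-Analysis.Analysis"
begin

text \<open>Variables have type 'v; the differential variable x' of x is d x, where
  d :: 'v => 'v is a parameter.  Function symbols have type 'f, arity ar f, and
  interpretation I f :: real list => real (a function R^k -> R, with R^k represented
  by real lists of length k).\<close>

datatype ('v, 'f) trm =
    Var 'v
  | Const rat
  | Plus "('v, 'f) trm" "('v, 'f) trm"
  | Times "('v, 'f) trm" "('v, 'f) trm"
  | Fun 'f "('v, 'f) trm list"
  | Differential "('v, 'f) trm"

primrec wf_trm :: "('f \<Rightarrow> nat) \<Rightarrow> ('v, 'f) trm \<Rightarrow> bool" where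
  "wf_trm ar (Var x) = True"
| "wf_trm ar (Const c) = True"
| "wf_trm ar (Plus a b) = (wf_trm ar a \<and> wf_trm ar b)"
| "wf_trm ar (Times a b) = (wf_trm ar a \<and> wf_trm ar b)"
| "wf_trm ar (Fun f args) = (length args = ar f \<and> list_all (wf_trm ar) args)"
| "wf_trm ar (Differential e) = wf_trm ar e"

primrec fv :: "('v \<Rightarrow> 'v) \<Rightarrow> ('v, 'f) trm \<Rightarrow> 'v set" where
  "fv d (Var x) = {x}"
| "fv d (Const c) = {}"
| "fv d (Plus a b) = fv d a \<union> fv d b"
| "fv d (Times a b) = fv d a \<union> fv d b"
| "fv d (Fun f args) = \<Union> (set (map (fv d) args))"
| "fv d (Differential e) = fv d e \<union> d ` fv d e"

primrec diff_free :: "('v \<Rightarrow> 'v) \<Rightarrow> ('v, 'f) trm \<Rightarrow> bool" where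
  "diff_free d (Var x) = (x \<notin> range d)"
| "diff_free d (Const c) = True"
| "diff_free d (Plus a b) = (diff_free d a \<and> diff_free d b)"
| "diff_free d (Times a b) = (diff_free d a \<and> diff_free d b)"
| "diff_free d (Fun f args) = list_all (diff_free d) args"
| "diff_free d (Differential e) = False"

primrec subst :: "('v \<Rightarrow> ('v, 'f) trm) \<Rightarrow> ('v, 'f) trm \<Rightarrow> ('v, 'f) trm" where
  "subst \<sigma> (Var x) = \<sigma> x"
| "subst \<sigma> (Const c) = Const c"
| "subst \<sigma> (Plus a b) = Plus (subst \<sigma> a) (subst \<sigma> b)"
| "subst \<sigma> (Times a b) = Times (subst \<sigma> a) (subst \<sigma> b)"
| "subst \<sigma> (Fun f args) = Fun f (map (subst \<sigma>) args)"
| "subst \<sigma> (Differential e) = Differential (subst \<sigma> e)"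

definition inst :: "'v list \<Rightarrow> ('v, 'f) trm list \<Rightarrow> 'v \<Rightarrow> ('v, 'f) trm" where
  "inst ys es y = (case map_of (zip ys es) y of Some e \<Rightarrow> e | None \<Rightarrow> Var y)"

fun tsum :: "('v, 'f) trm list \<Rightarrow> ('v, 'f) trm" where
  "tsum [] = Const 0"
| "tsum [t] = t"
| "tsum (t # u # ts) = Plus t (tsum (u # ts))"

text \<open>Partial derivative of g : R^k -> R with respect to its i-th argument (0-based), at p.\<close>
definition partial_deriv :: "(real list \<Rightarrow> real) \<Rightarrow> nat \<Rightarrow> real list \<Rightarrow> real" where
  "partial_deriv g i p = deriv (\<lambda>t. g (p[i := t])) (p ! i)"

primrec sem :: "('f \<Rightarrow> real list \<Rightarrow> real) \<Rightarrow> ('v \<Rightarrow> 'v) \<Rightarrow> ('v \<Rightarrow> real) \<Rightarrow> ('v, 'f) trm \<Rightarrow> real" where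
  "sem I d \<omega> (Var x) = \<omega> x"
| "sem I d \<omega> (Const c) = of_rat c"
| "sem I d \<omega> (Plus a b) = sem I d \<omega> a + sem I d \<omega> b"
| "sem I d \<omega> (Times a b) = sem I d \<omega> a * sem I d \<omega> b"
| "sem I d \<omega> (Fun f args) = I f (map (sem I d \<omega>) args)"
| "sem I d \<omega> (Differential e) =
     infsum (\<lambda>x. \<omega> (d x) * deriv (\<lambda>t. sem I d (fun_upd \<omega> x t) e) (\<omega> x)) UNIV"

definition valid :: "('f \<Rightarrow> real list \<Rightarrow> real) \<Rightarrow> ('v \<Rightarrow> 'v) \<Rightarrow> ('v, 'f) trm \<Rightarrow> ('v, 'f) trm \<Rightarrow> bool" where
  "valid I d e e' \<longleftrightarrow> (\<forall>\<omega>. sem I d \<omega> e = sem I d \<omega> e')"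

definition lnorm :: "real list \<Rightarrow> real" where
  "lnorm v = sqrt (\<Sum>x\<leftarrow>v. x\<^sup>2)"

definition has_grad :: "(real list \<Rightarrow> real) \<Rightarrow> real list \<Rightarrow> real list \<Rightarrow> bool" where
  "has_grad g D p \<longleftrightarrow> length D = length p \<and>
     (\<forall>\<epsilon>>0. \<exists>\<delta>>0. \<forall>v. length v = length p \<and> lnorm (map2 (-) v p) < \<delta> \<longrightarrow>
        \<bar>g v - g p - (\<Sum>i<length p. D ! i * (v ! i - p ! i))\<bar> \<le> \<epsilon> * lnorm (map2 (-) v p))"

definition ldifferentiable :: "(real list \<Rightarrow> real) \<Rightarrow> real list \<Rightarrow> bool" where
  "ldifferentiable g p \<longleftrightarrow> (\<exists>D. has_grad g D p)"

definition smooth_fun :: "nat \<Rightarrow> (real list \<Rightarrow> real) \<Rightarrow> bool" where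
  "smooth_fun k g \<longleftrightarrow> (\<forall>is. set is \<subseteq> {..<k} \<longrightarrow>
     (\<forall>p. length p = k \<longrightarrow> ldifferentiable (foldr (\<lambda>i g. partial_deriv g i) is g) p))"

end

theory Submission
  imports Defs
begin

text \<open>
  Along a coordinate line t \<mapsto> \<omega>(x := t), every differential-free term is a differentiable
  function of t, by induction on the term; for a function symbol this is a one-variable chain
  rule through the Frechet gradient of its interpretation.  The same chain rule writes the
  partial derivative of h(e_1,...,e_k) in x as the sum over i of (\<partial>_i h) times the partial
  derivative of e_i in x.  Only the finitely many free variables contribute to a differential,
  so the defining sum over all x is finite and can be exchanged with the sum over i; finally
  the semantics of substitution identifies the value of \<partial>_i h(e_1,...,e_k) with the i-th
  gradient component.
\<close>

lemma lnorm_map_upt: "lnorm (map \<phi> [0..<k]) = L2_set \<phi> {..<k}"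
  unfolding lnorm_def L2_set_def
  by (simp add: o_def atLeast0LessThan[symmetric] sum_set_upt_conv_sum_list_nat[symmetric])

lemma L2_set_difference_quotient_tendsto:
  assumes "\<And>i. i < k \<Longrightarrow> (f i has_real_derivative f' i) (at t0)"
  shows "((\<lambda>t. L2_set (\<lambda>i. f i t - f i t0) {..<k} / \<bar>t - t0\<bar>) \<longlongrightarrow> L2_set f' {..<k}) (at t0)"
proof -
  have quotient: "L2_set (\<lambda>i. f i t - f i t0) {..<k} / \<bar>t - t0\<bar>
      = L2_set (\<lambda>i. (f i t - f i t0) / (t - t0)) {..<k}" for t
    by (simp add: L2_set_def power_divide sum_divide_distrib[symmetric] real_sqrt_divide)
  have "((\<lambda>t. (f i t - f i t0) / (t - t0)) \<longlongrightarrow> f' i) (at t0)" if "i < k" for i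
    using assms[OF that] by (simp add: has_field_derivative_iff)
  then have "((\<lambda>t. L2_set (\<lambda>i. (f i t - f i t0) / (t - t0)) {..<k}) \<longlongrightarrow> L2_set f' {..<k}) (at t0)"
    unfolding L2_set_def by (intro tendsto_intros) auto
  then show ?thesis by (simp only: quotient)
qed

lemma has_grad_chain:
  fixes g :: "real list \<Rightarrow> real" and f :: "nat \<Rightarrow> real \<Rightarrow> real"
  assumes grad: "has_grad g D p" and len: "length p = k"
    and deriv: "\<And>i. i < k \<Longrightarrow> (f i has_real_derivative f' i) (at t0)"
    and start: "\<And>i. i < k \<Longrightarrow> f i t0 = p ! i"
  shows "((\<lambda>t. g (map (\<lambda>i. f i t) [0..<k])) has_real_derivative (\<Sum>i<k. D ! i * f' i)) (at t0)"
proof -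
  define v where "v t = map (\<lambda>i. f i t) [0..<k]" for t
  define r where "r t = g (v t) - g p - (\<Sum>i<k. D ! i * (f i t - f i t0))" for t
  have lnorm_increment: "lnorm (map2 (-) (v t) p) = L2_set (\<lambda>i. f i t - f i t0) {..<k}" for t
  proof -
    have "map2 (-) (v t) p = map (\<lambda>i. f i t - f i t0) [0..<k]"
      using len start by (intro nth_equalityI) (auto simp: v_def)
    then show ?thesis by (simp add: lnorm_map_upt)
  qed
  define M where "M = L2_set f' {..<k} + 1"
  have "M > 0" by (simp add: M_def L2_set_nonneg add_nonneg_pos)
  have lipschitz: "\<forall>\<^sub>F t in at t0. lnorm (map2 (-) (v t) p) \<le> M * \<bar>t - t0\<bar>"
  proof -
    have "((\<lambda>t. L2_set (\<lambda>i. f i t - f i t0) {..<k} / \<bar>t - t0\<bar>) \<longlongrightarrow> L2_set f' {..<k}) (at t0)"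
      using deriv by (rule L2_set_difference_quotient_tendsto)
    then have "\<forall>\<^sub>F t in at t0. L2_set (\<lambda>i. f i t - f i t0) {..<k} / \<bar>t - t0\<bar> < M"
      by (rule order_tendstoD) (simp add: M_def)
    moreover have "\<forall>\<^sub>F t in at t0. t \<noteq> t0" by (rule eventually_at_filter[THEN iffD2]) simp
    ultimately show ?thesis
      by eventually_elim (simp add: lnorm_increment divide_less_eq less_imp_le)
  qed
  have "((\<lambda>t. r t / (t - t0)) \<longlongrightarrow> 0) (at t0)"
    \<comment> \<open>r is o(lnorm (v t - p)) by Frechet differentiability, and lnorm (v t - p) = O(|t - t0|)\<close>
  proof (rule tendstoI)
    fix e :: real assume "e > 0"
    then have "e / (2 * M) > 0"
      using \<open>M > 0\<close> by simp
    with grad obtain \<delta> where "\<delta> > 0" and remainder: "\<And>w. length w = length p \<Longrightarrow>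
        lnorm (map2 (-) w p) < \<delta> \<Longrightarrow>
        \<bar>g w - g p - (\<Sum>i<length p. D ! i * (w ! i - p ! i))\<bar> \<le> e / (2 * M) * lnorm (map2 (-) w p)"
      unfolding has_grad_def by blast
    have "\<forall>\<^sub>F t in at t0. dist t t0 < \<delta> / M"
      using \<open>\<delta> > 0\<close> \<open>M > 0\<close> by (intro tendstoD[OF tendsto_ident_at]) simp
    with lipschitz show "\<forall>\<^sub>F t in at t0. dist (r t / (t - t0)) 0 < e"
    proof eventually_elim
      case (elim t)
      then have "lnorm (map2 (-) (v t) p) < \<delta>"
        using \<open>M > 0\<close> by (simp add: dist_real_def pos_less_divide_eq mult.commute)
      moreover have "length (v t) = length p"
        using len by (simp add: v_def)
      moreover have "(\<Sum>i<length p. D ! i * (v t ! i - p ! i)) = (\<Sum>i<k. D ! i * (f i t - f i t0))"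
        using len start by (intro sum.cong) (auto simp: v_def)
      ultimately have "\<bar>r t\<bar> \<le> e / (2 * M) * lnorm (map2 (-) (v t) p)"
        using remainder[of "v t"] by (simp only: r_def)
      also have "\<dots> \<le> e / (2 * M) * (M * \<bar>t - t0\<bar>)"
        using elim \<open>e > 0\<close> \<open>M > 0\<close> by (intro mult_left_mono) auto
      also have "\<dots> = e / 2 * \<bar>t - t0\<bar>"
        using \<open>M > 0\<close> by simp
      finally have "\<bar>r t\<bar> \<le> e / 2 * \<bar>t - t0\<bar>" .
      moreover have "t \<noteq> t0 \<Longrightarrow> e / 2 * \<bar>t - t0\<bar> < e * \<bar>t - t0\<bar>"
        using \<open>e > 0\<close> by simp
      ultimately have "t \<noteq> t0 \<Longrightarrow> \<bar>r t\<bar> < e * \<bar>t - t0\<bar>"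
        by linarith
      then show ?case
        using \<open>e > 0\<close> by (cases "t = t0") (auto simp: dist_real_def abs_divide pos_divide_less_eq)
    qed
  qed
  moreover have "v t0 = p"
    using len start by (intro nth_equalityI) (auto simp: v_def)
  then have "r t0 = 0"
    by (simp add: r_def)
  ultimately have "(r has_real_derivative 0) (at t0)"
    by (simp add: has_field_derivative_iff)
  then have "((\<lambda>t. g p + (\<Sum>i<k. D ! i * (f i t - f i t0)) + r t) has_real_derivative
      (\<Sum>i<k. D ! i * f' i)) (at t0)"
    by (auto intro!: derivative_eq_intros deriv simp: mult.commute)
  then show ?thesis
    unfolding r_def v_def by simp
qed

lemma partial_deriv_eq_grad:
  assumes grad: "has_grad g D p" and "i < length p"
  shows "partial_deriv g i p = D ! i"
proof -
  define k where "k = length p"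
  have "((\<lambda>t. g (map (\<lambda>j. if j = i then t else p ! j) [0..<k])) has_real_derivative
      (\<Sum>j<k. D ! j * (if j = i then 1 else 0))) (at (p ! i))"
    by (rule has_grad_chain[OF grad]) (auto simp: k_def)
  moreover have "map (\<lambda>j. if j = i then t else p ! j) [0..<k] = p[i := t]" for t
    by (rule nth_equalityI) (auto simp: k_def nth_list_update)
  moreover have "(\<Sum>j<k. D ! j * (if j = i then 1 else 0)) = D ! i"
    using \<open>i < length p\<close> by (simp add: k_def if_distrib cong: if_cong)
  ultimately show ?thesis
    unfolding partial_deriv_def by (simp add: DERIV_imp_deriv)
qed

lemma smooth_fun_has_grad:
  assumes "smooth_fun k g" and "length p = k"
  obtains D where "has_grad g D p"
  using assms unfolding smooth_fun_def ldifferentiable_def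
  by (metis empty_set empty_subsetI foldr_Nil id_apply)

lemma sem_coincidence:
  "(\<And>y. y \<in> fv d e \<Longrightarrow> \<omega> y = \<omega>' y) \<Longrightarrow> sem I d \<omega> e = sem I d \<omega>' e"
proof (induction e arbitrary: \<omega> \<omega>')
  case (Plus a b)
  show ?case
    using Plus.IH[of \<omega> \<omega>'] Plus.prems by simp
next
  case (Times a b)
  show ?case
    using Times.IH[of \<omega> \<omega>'] Times.prems by simp
next
  case (Fun f args)
  have "sem I d \<omega> a = sem I d \<omega>' a" if "a \<in> set args" for a
    by (rule Fun.IH[OF that]) (use Fun.prems that in auto)
  then have "map (sem I d \<omega>) args = map (sem I d \<omega>') args"
    by simp
  then show ?case
    by (simp only: sem.simps)
next
  case (Differential e)
  have "\<omega> (d x) * deriv (\<lambda>t. sem I d (fun_upd \<omega> x t) e) (\<omega> x) =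
        \<omega>' (d x) * deriv (\<lambda>t. sem I d (fun_upd \<omega>' x t) e) (\<omega>' x)" for x
  proof (cases "x \<in> fv d e")
    case True
    then have "\<omega> x = \<omega>' x" and "\<omega> (d x) = \<omega>' (d x)"
      using Differential.prems by auto
    moreover have "(\<lambda>t. sem I d (fun_upd \<omega> x t) e) = (\<lambda>t. sem I d (fun_upd \<omega>' x t) e)"
      by (rule ext, rule Differential.IH) (use Differential.prems in auto)
    ultimately show ?thesis
      by simp
  next
    case False
    then have "(\<lambda>t. sem I d (fun_upd \<omega> x t) e) = (\<lambda>t. sem I d \<omega> e)"
      and "(\<lambda>t. sem I d (fun_upd \<omega>' x t) e) = (\<lambda>t. sem I d \<omega>' e)"
      by (auto intro!: Differential.IH)
    then show ?thesis
      by simp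
  qed
  then show ?case
    by simp
qed simp_all

lemma deriv_sem_fun_upd_eq_0:
  assumes "x \<notin> fv d e"
  shows "deriv (\<lambda>t. sem I d (fun_upd \<omega> x t) e) a = 0"
proof -
  have "(\<lambda>t. sem I d (fun_upd \<omega> x t) e) = (\<lambda>t. sem I d \<omega> e)"
    using assms by (auto intro!: sem_coincidence)
  then show ?thesis
    by simp
qed

lemma finite_fv: "finite (fv d e)"
  by (induction e) auto

lemma subst_closed: "fv d e = {} \<Longrightarrow> subst \<sigma> e = e"
  by (induction e) (auto intro: map_idI)

lemma sem_subst:
  "fv d e \<inter> range d = {} \<Longrightarrow> sem I d \<omega> (subst \<sigma> e) = sem I d (\<lambda>y. sem I d \<omega> (\<sigma> y)) e"
proof (induction e)
  case (Fun f args)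
  have "sem I d \<omega> (subst \<sigma> a) = sem I d (\<lambda>y. sem I d \<omega> (\<sigma> y)) a" if "a \<in> set args" for a
    using that Fun.prems by (intro Fun.IH) auto
  then show ?case
    by (simp cong: map_cong)
next
  case (Differential e)
  then have "fv d (Differential e) = {}"
    by auto
  then show ?case
    by (metis empty_iff sem_coincidence subst_closed)
qed (auto simp: Int_Un_distrib2)

lemma sem_tsum: "sem I d \<omega> (tsum ts) = (\<Sum>t\<leftarrow>ts. sem I d \<omega> t)"
  by (induction ts rule: tsum.induct) auto

lemma has_real_derivative_sem_Fun:
  assumes grad: "has_grad (I f) D (map (sem I d (W t0)) args)"
    and args: "\<And>i. i < length args \<Longrightarrow>
      ((\<lambda>t. sem I d (W t) (args ! i)) has_real_derivative F i) (at t0)"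
  shows "((\<lambda>t. sem I d (W t) (Fun f args)) has_real_derivative (\<Sum>i<length args. D ! i * F i)) (at t0)"
proof -
  have "((\<lambda>t. I f (map (\<lambda>i. sem I d (W t) (args ! i)) [0..<length args])) has_real_derivative
      (\<Sum>i<length args. D ! i * F i)) (at t0)"
    by (rule has_grad_chain[OF grad]) (simp_all add: args)
  moreover have "map (\<lambda>i. sem I d (W t) (args ! i)) [0..<length args] = map (sem I d (W t)) args" for t
    by (rule nth_equalityI) simp_all
  ultimately show ?thesis
    by simp
qed

lemma sem_fun_upd_differentiable:
  assumes smooth: "\<And>f. smooth_fun (ar f) (I f)"
  shows "wf_trm ar e \<Longrightarrow> diff_free d e \<Longrightarrow> (\<lambda>t. sem I d (fun_upd \<omega> x t) e) field_differentiable at t0"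
proof (induction e)
  case (Fun f args)
  obtain D where grad: "has_grad (I f) D (map (sem I d (fun_upd \<omega> x t0)) args)"
    by (rule smooth_fun_has_grad[OF smooth]) (use Fun.prems in auto)
  have "((\<lambda>t. sem I d (fun_upd \<omega> x t) (args ! i)) has_real_derivative
      deriv (\<lambda>t. sem I d (fun_upd \<omega> x t) (args ! i)) t0) (at t0)" if "i < length args" for i
    using that Fun by (auto simp: DERIV_deriv_iff_field_differentiable list_all_iff intro!: Fun.IH)
  then have "((\<lambda>t. sem I d (fun_upd \<omega> x t) (Fun f args)) has_real_derivative
      (\<Sum>i<length args. D ! i * deriv (\<lambda>t. sem I d (fun_upd \<omega> x t) (args ! i)) t0)) (at t0)"
    by (rule has_real_derivative_sem_Fun[where W = "fun_upd \<omega> x", OF grad])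
  then show ?case
    unfolding field_differentiable_def by blast
next
  case (Var y)
  then show ?case
    by (cases "y = x") simp_all
qed (auto intro!: derivative_intros)

lemma sem_Differential_eq_sum:
  assumes "finite S" and "fv d e \<subseteq> S"
  shows "sem I d \<omega> (Differential e) = (\<Sum>x\<in>S. \<omega> (d x) * deriv (\<lambda>t. sem I d (fun_upd \<omega> x t) e) (\<omega> x))"
proof -
  have "sem I d \<omega> (Differential e)
      = infsum (\<lambda>x. \<omega> (d x) * deriv (\<lambda>t. sem I d (fun_upd \<omega> x t) e) (\<omega> x)) S"
    unfolding sem.simps using assms(2)
    by (intro infsum_cong_neutral) (auto intro: deriv_sem_fun_upd_eq_0)
  then show ?thesis
    using \<open>finite S\<close> by simp
qed

lemma sem_Differential_Fun:
  assumes smooth: "\<And>f. smooth_fun (ar f) (I f)"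
    and args: "\<forall>e\<in>set es. wf_trm ar e \<and> diff_free d e"
    and grad: "has_grad (I f) D (map (sem I d \<omega>) es)"
  shows "sem I d \<omega> (Differential (Fun f es)) = (\<Sum>i<length es. D ! i * sem I d \<omega> (Differential (es ! i)))"
proof -
  define S where "S = fv d (Fun f es)"
  define c where "c i x = deriv (\<lambda>t. sem I d (fun_upd \<omega> x t) (es ! i)) (\<omega> x)" for i x
  have S: "finite S" "\<And>i. i < length es \<Longrightarrow> fv d (es ! i) \<subseteq> S"
    by (auto simp: S_def finite_fv intro!: bexI[OF _ nth_mem])
  have deriv_Fun: "deriv (\<lambda>t. sem I d (fun_upd \<omega> x t) (Fun f es)) (\<omega> x) = (\<Sum>i<length es. D ! i * c i x)" for x
  proof (rule DERIV_imp_deriv, rule has_real_derivative_sem_Fun)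
    show "has_grad (I f) D (map (sem I d (fun_upd \<omega> x (\<omega> x))) es)"
      using grad by simp
    show "((\<lambda>t. sem I d (fun_upd \<omega> x t) (es ! i)) has_real_derivative c i x) (at (\<omega> x))"
      if "i < length es" for i
      using args that unfolding c_def
      by (auto simp: DERIV_deriv_iff_field_differentiable intro!: sem_fun_upd_differentiable smooth)
  qed
  have "sem I d \<omega> (Differential (Fun f es))
      = (\<Sum>x\<in>S. \<omega> (d x) * deriv (\<lambda>t. sem I d (fun_upd \<omega> x t) (Fun f es)) (\<omega> x))"
    by (rule sem_Differential_eq_sum) (simp_all add: S_def finite_fv)
  also have "\<dots> = (\<Sum>x\<in>S. \<omega> (d x) * (\<Sum>i<length es. D ! i * c i x))"
    by (simp only: deriv_Fun)
  also have "\<dots> = (\<Sum>i<length es. D ! i * (\<Sum>x\<in>S. \<omega> (d x) * c i x))"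
    by (simp add: sum_distrib_left mult.left_commute sum.swap[of _ S])
  also have "\<dots> = (\<Sum>i<length es. D ! i * sem I d \<omega> (Differential (es ! i)))"
    using sem_Differential_eq_sum[OF S] by (simp add: c_def)
  finally show ?thesis .
qed

lemma map_sem_inst:
  assumes "distinct ys" and "length ys = length es"
  shows "map (\<lambda>y. sem I d \<omega> (inst ys es y)) ys = map (sem I d \<omega>) es"
  using assms by (intro nth_equalityI) (auto simp: inst_def map_of_zip_nth)

theorem lemma2p5:
  fixes I :: "'f::finite \<Rightarrow> real list \<Rightarrow> real" and ar :: "'f \<Rightarrow> nat"
    and d :: "'v \<Rightarrow> 'v" and h :: 'f and ys :: "'v list"
    and dh :: "('v, 'f) trm list" and es :: "('v, 'f) trm list"
  assumes smooth: "\<forall>f. smooth_fun (ar f) (I f)"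
    and ys: "length ys = ar h" "distinct ys" "\<forall>y\<in>set ys. y \<notin> range d"
    and dh_wf: "length dh = ar h" "\<forall>i<ar h. wf_trm ar (dh ! i) \<and> fv d (dh ! i) \<subseteq> set ys"
    and dh_sem: "\<forall>i<ar h. \<forall>\<omega>. sem I d \<omega> (dh ! i) = partial_deriv (I h) i (map \<omega> ys)"
    and es: "length es = ar h" "\<forall>e\<in>set es. wf_trm ar e \<and> diff_free d e"
  shows "valid I d (Differential (Fun h es))
           (tsum (map (\<lambda>i. Times (subst (inst ys es) (dh ! i)) (Differential (es ! i))) [0..<ar h]))"
  unfolding valid_def
proof
  fix \<omega>
  define p where "p = map (sem I d \<omega>) es"
  have "length p = ar h"
    using es(1) by (simp add: p_def)
  then obtain D where grad: "has_grad (I h) D p"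
    by (rule smooth_fun_has_grad[OF smooth[rule_format]])
  have "sem I d \<omega> (subst (inst ys es) (dh ! i)) = D ! i" if "i < ar h" for i
  proof -
    have "fv d (dh ! i) \<inter> range d = {}"
      using dh_wf ys that by auto
    then have "sem I d \<omega> (subst (inst ys es) (dh ! i)) = partial_deriv (I h) i p"
      using dh_sem that ys es by (simp add: sem_subst map_sem_inst p_def)
    also have "\<dots> = D ! i"
      using partial_deriv_eq_grad[OF grad] that es by (simp add: p_def)
    finally show ?thesis .
  qed
  then show "sem I d \<omega> (Differential (Fun h es)) = sem I d \<omega> (tsum
      (map (\<lambda>i. Times (subst (inst ys es) (dh ! i)) (Differential (es ! i))) [0..<ar h]))"
    using sem_Differential_Fun[OF smooth[rule_format] es(2) grad[unfolded p_def]] es(1)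
    by (simp add: sem_tsum sum_list_sum_nth atLeast0LessThan)
qed

end
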